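(* For all integers $t\ge0$ and $k\ge1$, \[D(2^{k+1}t+2^k-1)\ge\min\bigl(D(t),D(t+1)\bigr)+\frac{k}{2^{k-1}}.\]
   Context: $s(n)$ is the number of $1$s in the binary expansion of $n\ge0$; $\delta(j,t)=\lim_{N\to\infty}\frac1N|\{0\le n<N: s(n+t)-s(n)=j\}|$ for $j\in\mathbb Z$, a probability distribution on $\mathbb Z$, and $\kappa_j(t)$ denotes its $j$-th cumulant ($\log\sum_k\delta(k,t)e^{2\pi ik\vartheta}=\sum_{j\ge0}\frac{\kappa_j(t)}{j!}(2\pi i\vartheta)^j$ near $\vartheta=0$). Set $D(t)=\kappa_2(t)-\kappa_3(t)/3$. *)

theory Defs
  imports "HOL-Analysis.Analysis"
begin

fun bsum :: "nat \<Rightarrow> nat" where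
  "bsum n = (if n = 0 then 0 else n mod 2 + bsum (n div 2))"

declare bsum.simps[simp del]

definition delta :: "int \<Rightarrow> nat \<Rightarrow> real" where
  "delta j t = lim (\<lambda>N::nat. real (card {n. n < N \<and> int (bsum (n + t)) - int (bsum n) = j}) / real N)"

text \<open>Cumulant generating function K_t(u) = log (sum_k delta(k,t) e^(k u)); with u = 2 pi i theta
  this is the logarithm of the characteristic function from the paper.\<close>
definition cgf :: "nat \<Rightarrow> complex \<Rightarrow> complex" where
  "cgf t u = Ln (\<Sum>\<^sub>\<infinity>k\<in>(UNIV::int set). complex_of_real (delta k t) * exp (of_int k * u))"

definition kappa :: "nat \<Rightarrow> nat \<Rightarrow> complex" where
  "kappa j t = (deriv ^^ j) (cgf t) 0"

definition D :: "nat \<Rightarrow> real" where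
  "D t = Re (kappa 2 t - kappa 3 t / 3)"

end

theory Submission
  imports Defs "HOL-Real_Asymp.Real_Asymp" "HOL-Complex_Analysis.Complex_Analysis"
begin

(* Splitting n < 2N by parity gives the recursions
     delta(j, 2t) = delta(j, t),   delta(j, 2t+1) = (delta(j-1, t) + delta(j+1, t+1)) / 2.
   Hence the moment generating function G_t(u) = sum_k delta(k, t) e^(k u) satisfies
     G_2t = G_t,   G_(2t+1) = (e^u G_t + e^(-u) G_(t+1)) / 2,
   and G_1(u) = e^u / (2 - e^(-u)); on Re u > -1/2 (note 1/2 < log 2) all G_t are holomorphic.
   As G_t(0) = 1 and G_t'(0) = 0, the cumulants kappa_2, kappa_3 are the second and third
   derivatives of G_t at 0, and differentiating the recursion yields
     D(2t) = D(t),   D(2t+1) = 1 + (D(t) + D(t+1)) / 2 + (kappa_2(t+1) - kappa_2(t)) / 2,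
   where kappa_2(t+1) - kappa_2(t) >= -2.  The indices n_j = 2^(j+1) t + 2^j - 1 satisfy
   n_(j+1) = 2 n_j + 1 and n_j + 1 = 2^j (2t+1), so iterating the odd recursion expresses D(n_k)
   as a convex combination of D(2t+1) and D(t) plus k 2^(-k) (kappa_2(t+1) - kappa_2(t) + 6) / 2,
   from which the bound follows. *)

section \<open>Digit sums and difference densities\<close>

lemma binary_induct [case_names zero one double Suc_double]:
  assumes zero: "P 0" and one: "P 1"
    and double: "\<And>n. P n \<Longrightarrow> P (2 * n)"
    and Suc_double: "\<And>n. P n \<Longrightarrow> P (n + 1) \<Longrightarrow> P (2 * n + 1)"
  shows "P (n :: nat)"
proof (induction n rule: less_induct)
  case (less n)
  show ?case
  proof (cases "n \<le> 1")
    case True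
    then show ?thesis using zero one by (cases n) auto
  next
    case False
    show ?thesis
    proof (cases "even n")
      case True
      then obtain m where "n = 2 * m" by blast
      with False show ?thesis using less[of m] double by simp
    next
      case odd: False
      then obtain m where "n = 2 * m + 1" by (blast elim: oddE)
      with False show ?thesis using less[of m] less[of "m + 1"] Suc_double by simp
    qed
  qed
qed

lemma pow2_mult_invariant:
  assumes "\<And>n. f (2 * n) = f n"
  shows "f (2 ^ j * n) = f (n :: nat)"
  by (induction j) (simp_all add: mult.assoc assms)

lemma card_filter_less_Suc:
  "card {n. n < Suc N \<and> P n} = card {n. n < N \<and> P n} + (if P N then 1 else 0)"
proof -
  have "{n. n < Suc N \<and> P n} = (if P N then insert N {n. n < N \<and> P n} else {n. n < N \<and> P n})"
    by (auto simp: less_Suc_eq)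
  then show ?thesis by simp
qed

lemma card_filter_less_double:
  "card {n :: nat. n < 2 * N \<and> P n} = card {m. m < N \<and> P (2 * m)} + card {m. m < N \<and> P (2 * m + 1)}"
proof (induction N)
  case (Suc N)
  have "2 * Suc N = Suc (Suc (2 * N))" by simp
  then show ?case using Suc by (simp only: card_filter_less_Suc) simp
qed simp

lemma LIMSEQ_even_odd:
  assumes "(\<lambda>n. f (2 * n)) \<longlonglongrightarrow> (l :: 'a :: topological_space)"
    and "(\<lambda>n. f (2 * n + 1)) \<longlonglongrightarrow> l"
  shows "f \<longlonglongrightarrow> l"
proof -
  have "eventually P sequentially"
    if "eventually (\<lambda>n. P (2 * n)) sequentially" "eventually (\<lambda>n. P (2 * n + 1)) sequentially" for P
  proof -
    from eventually_conj[OF that] obtain n\<^sub>0 where "\<And>n. n \<ge> n\<^sub>0 \<Longrightarrow> P (2 * n) \<and> P (2 * n + 1)"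
      by (auto simp: eventually_sequentially)
    then have "P n" if "n \<ge> 2 * n\<^sub>0 + 1" for n
      using that by (cases "even n") (auto elim!: evenE oddE)
    then show ?thesis by (auto simp: eventually_sequentially)
  qed
  then show ?thesis using assms by (auto simp: filterlim_iff)
qed

lemma LIMSEQ_ratio_from_even:
  fixes f :: "nat \<Rightarrow> nat"
  assumes mono: "\<And>N. f N \<le> f (Suc N)" and step: "\<And>N. f (Suc N) \<le> f N + 1"
    and lim: "(\<lambda>N. f (2 * N) / real (2 * N)) \<longlonglongrightarrow> L"
  shows "(\<lambda>N. f N / real N) \<longlonglongrightarrow> L"
proof (rule LIMSEQ_even_odd[OF lim])
  have "(\<lambda>N. real (2 * N) / real (2 * N + 1)) \<longlonglongrightarrow> 1"
    by real_asymp
  from tendsto_mult[OF lim this]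
  have "(\<lambda>N. f (2 * N) / real (2 * N) * (real (2 * N) / real (2 * N + 1))) \<longlonglongrightarrow> L"
    by simp
  then have lower: "(\<lambda>N. f (2 * N) / real (2 * N + 1)) \<longlonglongrightarrow> L"
    by (rule Lim_transform_eventually) (auto simp: eventually_sequentially intro!: exI[of _ 1])
  have "(\<lambda>N. 1 / real (2 * N + 1)) \<longlonglongrightarrow> 0"
    by real_asymp
  from tendsto_add[OF lower this]
  have upper: "(\<lambda>N. f (2 * N) / real (2 * N + 1) + 1 / real (2 * N + 1)) \<longlonglongrightarrow> L"
    by simp
  show "(\<lambda>N. f (2 * N + 1) / real (2 * N + 1)) \<longlonglongrightarrow> L"
  proof (rule tendsto_sandwich[OF _ _ lower upper]; intro always_eventually allI)
    fix N
    show "f (2 * N) / real (2 * N + 1) \<le> f (2 * N + 1) / real (2 * N + 1)"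
      using mono[of "2 * N"] by (simp add: divide_right_mono)
    show "f (2 * N + 1) / real (2 * N + 1) \<le> f (2 * N) / real (2 * N + 1) + 1 / real (2 * N + 1)"
      using step[of "2 * N"] by (simp add: divide_right_mono flip: add_divide_distrib)
  qed
qed

lemma bsum_double [simp]: "bsum (2 * n) = bsum n"
  by (cases "n = 0") (simp_all add: bsum.simps[of "2 * n"])

lemma bsum_Suc_double [simp]: "bsum (Suc (2 * n)) = Suc (bsum n)"
  by (simp add: bsum.simps[of "Suc (2 * n)"])

lemma bsum_Suc_le: "bsum (Suc n) \<le> Suc (bsum n)"
proof (induction n rule: binary_induct)
  case zero
  show ?case by (simp add: bsum.simps)
next
  case one
  show ?case by (simp add: bsum.simps)
next
  case (Suc_double n)
  have "Suc (Suc (2 * n)) = 2 * Suc n" by simp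
  then show ?case using Suc_double by (simp del: mult_Suc_right)
qed simp

definition count_diff :: "int \<Rightarrow> nat \<Rightarrow> nat \<Rightarrow> nat" where
  "count_diff j t N = card {n. n < N \<and> int (bsum (n + t)) - int (bsum n) = j}"

lemma count_diff_mono: "count_diff j t N \<le> count_diff j t (Suc N)"
  and count_diff_Suc_le: "count_diff j t (Suc N) \<le> count_diff j t N + 1"
  unfolding count_diff_def card_filter_less_Suc by auto

lemma count_diff_0: "count_diff j 0 N = (if j = 0 then N else 0)"
  by (simp add: count_diff_def)

lemma count_diff_double: "count_diff j (2 * t) (2 * N) = 2 * count_diff j t N"
proof -
  have "bsum (2 * m + 2 * t) = bsum (m + t)" "bsum (2 * m + 1 + 2 * t) = bsum (m + t) + 1" for m
    using bsum_double[of "m + t"] bsum_Suc_double[of "m + t"] by (simp_all add: algebra_simps)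
  then show ?thesis
    unfolding count_diff_def card_filter_less_double by simp
qed

lemma count_diff_Suc_double:
  "count_diff j (2 * t + 1) (2 * N) = count_diff (j - 1) t N + count_diff (j + 1) (t + 1) N"
proof -
  have "bsum (2 * m + (2 * t + 1)) = bsum (m + t) + 1" "bsum (2 * m + 1 + (2 * t + 1)) = bsum (m + (t + 1))" for m
    using bsum_Suc_double[of "m + t"] bsum_double[of "m + t + 1"] by (simp_all add: algebra_simps)
  then have "(int (bsum (2 * m + (2 * t + 1))) - int (bsum (2 * m)) = j) \<longleftrightarrow>
               (int (bsum (m + t)) - int (bsum m) = j - 1)"
    "(int (bsum (2 * m + 1 + (2 * t + 1))) - int (bsum (2 * m + 1)) = j) \<longleftrightarrow>
               (int (bsum (m + (t + 1))) - int (bsum m) = j + 1)" for m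
    by auto
  then show ?thesis
    unfolding count_diff_def card_filter_less_double by simp
qed

lemma count_diff_1_eq_0:
  assumes "j \<ge> 2" shows "count_diff j 1 N = 0"
proof -
  have "int (bsum (n + 1)) - int (bsum n) \<noteq> j" for n
    using bsum_Suc_le[of n] assms by simp
  then show ?thesis by (simp add: count_diff_def)
qed

lemma count_diff_tendsto_double:
  assumes "(\<lambda>N. real (count_diff j t N) / N) \<longlonglongrightarrow> L"
  shows "(\<lambda>N. real (count_diff j (2 * t) N) / N) \<longlonglongrightarrow> L"
proof (rule LIMSEQ_ratio_from_even[where f = "count_diff j (2 * t)", OF count_diff_mono count_diff_Suc_le])
  have "real (count_diff j (2 * t) (2 * N)) / real (2 * N) = real (count_diff j t N) / N" for N
    by (simp add: count_diff_double)
  then show "(\<lambda>N. real (count_diff j (2 * t) (2 * N)) / real (2 * N)) \<longlonglongrightarrow> L"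
    using assms by simp
qed

lemma count_diff_tendsto_Suc_double:
  assumes "(\<lambda>N. real (count_diff (j - 1) t N) / N) \<longlonglongrightarrow> L\<^sub>1"
    and "(\<lambda>N. real (count_diff (j + 1) (t + 1) N) / N) \<longlonglongrightarrow> L\<^sub>2"
  shows "(\<lambda>N. real (count_diff j (2 * t + 1) N) / N) \<longlonglongrightarrow> (L\<^sub>1 + L\<^sub>2) / 2"
proof (rule LIMSEQ_ratio_from_even[where f = "count_diff j (2 * t + 1)", OF count_diff_mono count_diff_Suc_le])
  have "(\<lambda>N. real (count_diff j (2 * t + 1) (2 * N)) / real (2 * N)) =
          (\<lambda>N. (real (count_diff (j - 1) t N) / N + real (count_diff (j + 1) (t + 1) N) / N) / 2)"
    unfolding count_diff_Suc_double by (simp add: add_divide_distrib ac_simps)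
  also have "\<dots> \<longlonglongrightarrow> (L\<^sub>1 + L\<^sub>2) / 2"
    using assms by (intro tendsto_intros) simp_all
  finally show "(\<lambda>N. real (count_diff j (2 * t + 1) (2 * N)) / real (2 * N)) \<longlonglongrightarrow> (L\<^sub>1 + L\<^sub>2) / 2" .
qed

lemma count_diff_tendsto_0: "(\<lambda>N. real (count_diff j 0 N) / N) \<longlonglongrightarrow> (if j = 0 then 1 else 0)"
proof -
  have "eventually (\<lambda>N. real (count_diff j 0 N) / N = (if j = 0 then 1 else 0)) sequentially"
    by (auto simp: count_diff_0 eventually_sequentially intro!: exI[of _ 1])
  then show ?thesis by (rule tendsto_eventually)
qed

lemma count_diff_tendsto_1:
  "(\<lambda>N. real (count_diff j 1 N) / N) \<longlonglongrightarrow> (if j \<le> 1 then 1 / 2 ^ nat (2 - j) else 0)"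
proof (cases "j \<le> 1")
  case True
  \<comment> \<open>As 1 = 2 * 0 + 1, the odd recursion links index j at t = 1 to index j + 1 at t = 1;
    descend from the indices j \<ge> 2, where the count vanishes.\<close>
  have "(\<lambda>N. real (count_diff (1 - int m) 1 N) / N) \<longlonglongrightarrow> 1 / 2 ^ (m + 1)" for m
  proof (induction m)
    case 0
    have "(\<lambda>N. real (count_diff (1 + 1) (0 + 1) N) / N) \<longlonglongrightarrow> 0"
      using count_diff_1_eq_0[of "1 + 1"] by simp
    from count_diff_tendsto_Suc_double[OF count_diff_tendsto_0 this] show ?case by simp
  next
    case (Suc m)
    then have "(\<lambda>N. real (count_diff (1 - int (Suc m) + 1) (0 + 1) N) / N) \<longlonglongrightarrow> 1 / 2 ^ (m + 1)"
      by (simp add: algebra_simps)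
    from count_diff_tendsto_Suc_double[OF count_diff_tendsto_0 this] show ?case by simp
  qed
  from this[of "nat (1 - j)"] True show ?thesis
    by (simp add: nat_diff_distrib' Suc_nat_eq_nat_zadd1)
next
  case False
  then have "count_diff j 1 N = 0" for N
    by (intro count_diff_1_eq_0) simp
  with False show ?thesis by simp
qed

lemma count_diff_convergent: "convergent (\<lambda>N. real (count_diff j t N) / N)"
proof (induction t arbitrary: j rule: binary_induct)
  case zero
  show ?case using count_diff_tendsto_0 by (rule convergentI)
next
  case one
  show ?case using count_diff_tendsto_1 by (rule convergentI)
next
  case (double t)
  then show ?case by (auto simp: convergent_def intro: count_diff_tendsto_double)
next
  case (Suc_double t)
  then obtain L\<^sub>1 L\<^sub>2 where "(\<lambda>N. real (count_diff (j - 1) t N) / N) \<longlonglongrightarrow> L\<^sub>1"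
    and "(\<lambda>N. real (count_diff (j + 1) (t + 1) N) / N) \<longlonglongrightarrow> L\<^sub>2"
    by (meson convergent_def)
  from count_diff_tendsto_Suc_double[OF this] show ?case by (rule convergentI)
qed

lemma delta_tendsto: "(\<lambda>N. real (count_diff j t N) / N) \<longlonglongrightarrow> delta j t"
  using count_diff_convergent unfolding delta_def count_diff_def[symmetric]
  by (simp add: convergent_LIMSEQ_iff)

lemma delta_0: "delta j 0 = (if j = 0 then 1 else 0)"
  using delta_tendsto count_diff_tendsto_0 by (rule LIMSEQ_unique)

lemma delta_1: "delta j 1 = (if j \<le> 1 then 1 / 2 ^ nat (2 - j) else 0)"
  using delta_tendsto count_diff_tendsto_1 by (rule LIMSEQ_unique)

lemma delta_even: "delta j (2 * t) = delta j t"
  using delta_tendsto count_diff_tendsto_double[OF delta_tendsto] by (rule LIMSEQ_unique)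

lemma delta_odd: "delta j (2 * t + 1) = (delta (j - 1) t + delta (j + 1) (t + 1)) / 2"
  using delta_tendsto count_diff_tendsto_Suc_double[OF delta_tendsto delta_tendsto]
  by (rule LIMSEQ_unique)

section \<open>The moment generating function\<close>

lemma exp_half_less_2: "exp (1 / 2 :: real) < 2"
proof -
  have "exp (1 / 2 :: real) ^ 2 = exp 1"
    by (simp flip: exp_of_nat_mult)
  also have "\<dots> < 2 ^ 2"
    using e_less_272 by simp
  finally show ?thesis
    by (rule power_less_imp_less_base) simp
qed

lemma norm_exp_minus_less_2:
  assumes "Re u > -1 / 2"
  shows "norm (exp (- u)) < 2"
proof -
  have "norm (exp (- u)) = exp (- Re u)"
    by (simp add: norm_exp_eq_Re)
  also have "\<dots> < exp (1 / 2)"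
    using assms by simp
  finally show ?thesis
    using exp_half_less_2 by linarith
qed

lemma has_sum_int_shift: "((\<lambda>k. f (k + c)) has_sum S) (UNIV :: int set) \<longleftrightarrow> (f has_sum S) UNIV"
proof (rule has_sum_reindex_bij_betw)
  show "bij_betw (\<lambda>k. k + c) UNIV UNIV"
    by (rule bij_betwI[where g = "\<lambda>k. k - c"]) auto
qed

lemma has_sum_delta_exp_0:
  "((\<lambda>k. complex_of_real (delta k 0) * exp (of_int k * u)) has_sum 1) UNIV"
  by (rule has_sum_finite_neutralI[where B = "{0}"]) (auto simp: delta_0)

lemma has_sum_delta_exp_1:
  assumes "norm (exp (- u)) < 2"
  shows "((\<lambda>k. complex_of_real (delta k 1) * exp (of_int k * u)) has_sum exp u / (2 - exp (- u))) UNIV"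
proof -
  define q where "q = exp (- u) / 2"
  have "norm q < 1"
    using assms by (simp add: q_def norm_divide)
  then have "((\<lambda>m. q ^ m) has_sum 1 / (1 - q)) UNIV"
    by (intro norm_summable_imp_has_sum geometric_sums) (simp add: norm_power summable_geometric)
  then have "((\<lambda>m. exp u / 2 * q ^ m) has_sum exp u / 2 * (1 / (1 - q))) UNIV"
    by (rule has_sum_cmult_right)
  also have "exp u / 2 * (1 / (1 - q)) = exp u / (2 - exp (- u))"
    by (simp add: q_def field_simps)
  also have "((\<lambda>m. exp u / 2 * q ^ m) has_sum exp u / (2 - exp (- u))) UNIV \<longleftrightarrow>
      ((\<lambda>k. complex_of_real (delta k 1) * exp (of_int k * u)) has_sum exp u / (2 - exp (- u))) {..1}"
  proof (rule has_sum_reindex_bij_witness[where j = "\<lambda>m. 1 - int m" and i = "\<lambda>k. nat (1 - k)"])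
    fix m :: nat
    have "of_int (1 - int m) * u = u + of_nat m * (- u)"
      by (simp add: algebra_simps)
    then have "exp (of_int (1 - int m) * u) = exp u * exp (- u) ^ m"
      by (simp only: exp_add exp_of_nat_mult)
    moreover have "delta (1 - int m) 1 = 1 / 2 ^ (m + 1)"
      unfolding delta_1 by (simp add: nat_add_distrib)
    ultimately show "complex_of_real (delta (1 - int m) 1) * exp (of_int (1 - int m) * u) = exp u / 2 * q ^ m"
      by (simp add: q_def power_divide)
  qed auto
  finally show ?thesis
    by (rule has_sum_cong_neutral[THEN iffD1, rotated -1]) (auto simp: delta_1 simp del: One_nat_def)
qed

lemma has_sum_delta_exp_odd:
  assumes "((\<lambda>k. complex_of_real (delta k t) * exp (of_int k * u)) has_sum A) UNIV"
    and "((\<lambda>k. complex_of_real (delta k (t + 1)) * exp (of_int k * u)) has_sum B) UNIV"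
  shows "((\<lambda>k. complex_of_real (delta k (2 * t + 1)) * exp (of_int k * u))
           has_sum (exp u * A + exp (- u) * B) / 2) UNIV"
proof -
  define F where "F s = (\<lambda>k. complex_of_real (delta k s) * exp (of_int k * u))" for s
  have "((\<lambda>k. F t (k + -1)) has_sum A) UNIV" "((\<lambda>k. F (t + 1) (k + 1)) has_sum B) UNIV"
    using assms has_sum_int_shift[of "F t" "-1"] has_sum_int_shift[of "F (t + 1)" 1]
    by (simp_all add: F_def)
  then have "((\<lambda>k. exp u / 2 * F t (k + -1) + exp (- u) / 2 * F (t + 1) (k + 1))
               has_sum exp u / 2 * A + exp (- u) / 2 * B) UNIV"
    by (intro has_sum_add has_sum_cmult_right)
  moreover have "exp u / 2 * F t (k + -1) + exp (- u) / 2 * F (t + 1) (k + 1) = F (2 * t + 1) k" for k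
  proof -
    have "exp (of_int (k + -1) * u) = exp (of_int k * u) / exp u"
      "exp (of_int (k + 1) * u) = exp (of_int k * u) * exp u"
      by (simp_all add: algebra_simps exp_diff exp_add)
    then show ?thesis
      unfolding F_def delta_odd by (simp add: exp_minus field_simps)
  qed
  ultimately show ?thesis
    by (simp add: F_def add_divide_distrib)
qed

lemma delta_exp_summable:
  assumes "Re u > -1 / 2"
  shows "(\<lambda>k. complex_of_real (delta k t) * exp (of_int k * u)) summable_on UNIV"
proof (induction t rule: binary_induct)
  case zero
  show ?case using has_sum_delta_exp_0 by (rule has_sum_imp_summable)
next
  case one
  show ?case using has_sum_delta_exp_1[OF norm_exp_minus_less_2[OF assms]] by (rule has_sum_imp_summable)
next
  case (double t)
  then show ?case by (simp add: delta_even)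
next
  case (Suc_double t)
  then show ?case
    using has_sum_delta_exp_odd[OF has_sum_infsum has_sum_infsum] has_sum_imp_summable by blast
qed

definition mgf :: "nat \<Rightarrow> complex \<Rightarrow> complex" where
  "mgf t u = (\<Sum>\<^sub>\<infinity>k\<in>(UNIV :: int set). complex_of_real (delta k t) * exp (of_int k * u))"

lemma cgf_eq_Ln_mgf: "cgf t = (\<lambda>u. Ln (mgf t u))"
  by (simp add: cgf_def mgf_def fun_eq_iff)

lemma mgf_has_sum:
  assumes "Re u > -1 / 2"
  shows "((\<lambda>k. complex_of_real (delta k t) * exp (of_int k * u)) has_sum mgf t u) UNIV"
  unfolding mgf_def using delta_exp_summable[OF assms] by (rule has_sum_infsum)

lemma mgf_even: "mgf (2 * t) = mgf t"
  by (simp add: mgf_def delta_even fun_eq_iff)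

lemma mgf_odd:
  assumes "Re u > -1 / 2"
  shows "mgf (2 * t + 1) u = (exp u * mgf t u + exp (- u) * mgf (t + 1) u) / 2"
  using has_sum_delta_exp_odd[OF mgf_has_sum mgf_has_sum] mgf_has_sum assms
  by (blast intro: has_sum_unique)

lemma mgf_0: "mgf 0 u = 1"
  using has_sum_delta_exp_0 unfolding mgf_def by (rule infsumI)

lemma mgf_1:
  assumes "Re u > -1 / 2"
  shows "mgf 1 u = exp u / (2 - exp (- u))"
  using has_sum_delta_exp_1[OF norm_exp_minus_less_2[OF assms]] unfolding mgf_def by (rule infsumI)

lemma mgf_holomorphic: "mgf t holomorphic_on {u. Re u > -1 / 2}"
proof (induction t rule: binary_induct)
  case zero
  show ?case by (simp add: mgf_0)
next
  case one
  have "2 - exp (- u) \<noteq> 0" if "Re u > -1 / 2" for u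
  proof -
    have "exp (- u) \<noteq> 2"
      using norm_exp_minus_less_2[OF that] by (metis less_irrefl norm_numeral)
    then show ?thesis by simp
  qed
  then have "(\<lambda>u. exp u / (2 - exp (- u))) holomorphic_on {u. Re u > -1 / 2}"
    by (intro holomorphic_intros) auto
  then show ?case
    by (rule holomorphic_transform) (simp add: mgf_1 del: One_nat_def)
next
  case (double t)
  then show ?case by (simp add: mgf_even)
next
  case (Suc_double t)
  then have "(\<lambda>u. (exp u * mgf t u + exp (- u) * mgf (t + 1) u) / 2) holomorphic_on {u. Re u > -1 / 2}"
    by (intro holomorphic_intros) auto
  then show ?case
    by (rule holomorphic_transform) (simp only: mem_Collect_eq mgf_odd)
qed

lemma mgf_at_0: "mgf t 0 = 1"
proof (induction t rule: binary_induct)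
  case zero
  show ?case by (rule mgf_0)
next
  case one
  show ?case using mgf_1[of 0] by simp
next
  case (double t)
  then show ?case by (simp add: mgf_even)
next
  case (Suc_double t)
  then show ?case using mgf_odd[of 0 t] by simp
qed

section \<open>Cumulants\<close>

lemma higher_deriv_exp: "(deriv ^^ n) exp = (exp :: complex \<Rightarrow> complex)"
  by (induction n) (simp_all add: ext[OF DERIV_imp_deriv[OF DERIV_exp]])

lemma higher_deriv_exp_minus: "(deriv ^^ n) (\<lambda>w. exp (- w)) z = (-1) ^ n * exp (- z :: complex)"
proof -
  have "(deriv ^^ n) (\<lambda>w. exp ((-1) * w)) z = (-1) ^ n * (deriv ^^ n) exp ((-1) * z)"
    by (rule higher_deriv_compose_linear[where S = UNIV and T = UNIV]) (auto intro: holomorphic_intros)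
  then show ?thesis by (simp add: higher_deriv_exp)
qed

lemma deriv_deriv_Ln_comp_eventually:
  assumes h: "h holomorphic_on S" and S: "open S" "z \<in> S" and hz: "h z \<notin> \<real>\<^sub>\<le>\<^sub>0"
  shows "eventually (\<lambda>w. deriv (deriv (\<lambda>u. Ln (h u))) w =
           (deriv (deriv h) w * h w - deriv h w * deriv h w) / (h w * h w)) (nhds z)"
proof -
  define V where "V = S \<inter> h -` (- \<real>\<^sub>\<le>\<^sub>0)"
  have V: "open V" "z \<in> V"
    unfolding V_def using h S hz
    by (auto intro!: continuous_open_preimage holomorphic_on_imp_continuous_on)
  have Dh: "(h has_field_derivative deriv h w) (at w)" if "w \<in> S" for w
    using holomorphic_derivI[OF h S(1) that] .
  have Dh': "(deriv h has_field_derivative deriv (deriv h) w) (at w)" if "w \<in> S" for w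
    using holomorphic_derivI[OF holomorphic_deriv[OF h S(1)] S(1) that] .
  have deriv_Ln: "deriv (\<lambda>u. Ln (h u)) w = deriv h w / h w" if "w \<in> V" for w
  proof -
    from that have "w \<in> S" "h w \<notin> \<real>\<^sub>\<le>\<^sub>0"
      by (auto simp: V_def)
    then have "((\<lambda>u. Ln (h u)) has_field_derivative inverse (h w) * deriv h w) (at w)"
      using DERIV_chain2[OF has_field_derivative_Ln Dh] by blast
    then show ?thesis
      by (simp add: DERIV_imp_deriv divide_inverse ac_simps)
  qed
  show ?thesis
    using eventually_nhds_in_open[OF V]
  proof eventually_elim
    case (elim w)
    then have w: "w \<in> S" "h w \<noteq> 0"
      by (auto simp: V_def)
    have "deriv (deriv (\<lambda>u. Ln (h u))) w = deriv (\<lambda>w. deriv h w / h w) w"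
      using eventually_nhds_in_open[OF V(1) elim]
      by (intro deriv_cong_ev) (auto elim!: eventually_mono simp: deriv_Ln)
    also have "\<dots> = (deriv (deriv h) w * h w - deriv h w * deriv h w) / (h w * h w)"
      using w by (intro DERIV_imp_deriv DERIV_divide Dh Dh')
    finally show ?case .
  qed
qed

lemma higher_deriv_Ln_comp_at_0:
  assumes h: "h holomorphic_on S" and S: "open S" "0 \<in> S" and h0: "h 0 = 1" and h1: "deriv h 0 = 0"
  shows "(deriv ^^ 2) (\<lambda>u. Ln (h u)) 0 = (deriv ^^ 2) h 0"
    and "(deriv ^^ 3) (\<lambda>u. Ln (h u)) 0 = (deriv ^^ 3) h 0"
proof -
  have ev: "eventually (\<lambda>w. deriv (deriv (\<lambda>u. Ln (h u))) w =
           (deriv (deriv h) w * h w - deriv h w * deriv h w) / (h w * h w)) (nhds 0)"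
    using h0 by (intro deriv_deriv_Ln_comp_eventually[OF h S]) simp
  show "(deriv ^^ 2) (\<lambda>u. Ln (h u)) 0 = (deriv ^^ 2) h 0"
    using eventually_nhds_x_imp_x[OF ev] h0 h1 by (simp add: numeral_2_eq_2)
  have hol: "deriv h holomorphic_on S" "deriv (deriv h) holomorphic_on S"
    using h S(1) by (auto intro!: holomorphic_deriv)
  note D0 = holomorphic_derivI[OF h S(1,2)]
    and D1 = holomorphic_derivI[OF hol(1) S(1,2)]
    and D2 = holomorphic_derivI[OF hol(2) S(1,2)]
  have "((\<lambda>w. (deriv (deriv h) w * h w - deriv h w * deriv h w) / (h w * h w))
          has_field_derivative deriv (deriv (deriv h)) 0) (at 0)"
    by (rule DERIV_cong[OF DERIV_divide[OF DERIV_diff[OF DERIV_mult[OF D2 D0] DERIV_mult[OF D1 D1]]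
          DERIV_mult[OF D0 D0]]]) (simp_all add: h0 h1)
  then have "deriv (\<lambda>w. (deriv (deriv h) w * h w - deriv h w * deriv h w) / (h w * h w)) 0 =
               deriv (deriv (deriv h)) 0"
    by (rule DERIV_imp_deriv)
  moreover have "deriv (deriv (deriv (\<lambda>u. Ln (h u)))) 0 =
      deriv (\<lambda>w. (deriv (deriv h) w * h w - deriv h w * deriv h w) / (h w * h w)) 0"
    using ev by (rule deriv_cong_ev) simp
  ultimately show "(deriv ^^ 3) (\<lambda>u. Ln (h u)) 0 = (deriv ^^ 3) h 0"
    by (simp add: numeral_3_eq_3)
qed

definition moment :: "nat \<Rightarrow> nat \<Rightarrow> complex" where
  "moment n t = (deriv ^^ n) (mgf t) 0"

lemma moment_even: "moment n (2 * t) = moment n t"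
  by (simp add: moment_def mgf_even)

lemma moment_odd:
  "moment n (2 * t + 1) =
     (\<Sum>i = 0..n. of_nat (n choose i) * moment (n - i) t) / 2 +
     (\<Sum>i = 0..n. of_nat (n choose i) * ((-1) ^ i * moment (n - i) (t + 1))) / 2"
proof -
  define H where "H = {u :: complex. Re u > -1 / 2}"
  have H: "open H" "0 \<in> H"
    by (simp_all add: H_def open_halfspace_Re_gt)
  have hol: "mgf t holomorphic_on H" "mgf (t + 1) holomorphic_on H"
    unfolding H_def by (rule mgf_holomorphic)+
  then have hol': "(\<lambda>u. exp u * mgf t u) holomorphic_on H" "(\<lambda>u. exp (- u) * mgf (t + 1) u) holomorphic_on H"
    by (auto intro!: holomorphic_intros)
  have "mgf (2 * t + 1) u = 1 / 2 * (exp u * mgf t u) + 1 / 2 * (exp (- u) * mgf (t + 1) u)"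
    if "u \<in> H" for u
    using mgf_odd[of u t] that by (simp add: H_def field_simps)
  then have "eventually (\<lambda>u. mgf (2 * t + 1) u =
          1 / 2 * (exp u * mgf t u) + 1 / 2 * (exp (- u) * mgf (t + 1) u)) (nhds 0)"
    using eventually_nhds_in_open[OF H] by (rule eventually_mono[rotated]) blast
  then have "moment n (2 * t + 1) =
      (deriv ^^ n) (\<lambda>u. 1 / 2 * (exp u * mgf t u) + 1 / 2 * (exp (- u) * mgf (t + 1) u)) 0"
    unfolding moment_def by (rule higher_deriv_cong_ev) simp
  also have "\<dots> = (deriv ^^ n) (\<lambda>u. 1 / 2 * (exp u * mgf t u)) 0
                   + (deriv ^^ n) (\<lambda>u. 1 / 2 * (exp (- u) * mgf (t + 1) u)) 0"
    using hol hol' H by (intro higher_deriv_add holomorphic_intros)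
  also have "\<dots> = 1 / 2 * (deriv ^^ n) (\<lambda>u. exp u * mgf t u) 0
                   + 1 / 2 * (deriv ^^ n) (\<lambda>u. exp (- u) * mgf (t + 1) u) 0"
    using higher_deriv_cmult[OF hol'(1) H(2,1)] higher_deriv_cmult[OF hol'(2) H(2,1)] by (simp only:)
  also have "(deriv ^^ n) (\<lambda>u. exp u * mgf t u) 0 =
      (\<Sum>i = 0..n. of_nat (n choose i) * (deriv ^^ i) exp 0 * (deriv ^^ (n - i)) (mgf t) 0)"
    using hol H by (intro higher_deriv_mult holomorphic_intros)
  also have "(deriv ^^ n) (\<lambda>u. exp (- u) * mgf (t + 1) u) 0 =
      (\<Sum>i = 0..n. of_nat (n choose i) * (deriv ^^ i) (\<lambda>u. exp (- u)) 0 * (deriv ^^ (n - i)) (mgf (t + 1)) 0)"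
    using hol H by (intro higher_deriv_mult holomorphic_intros)
  finally show ?thesis
    by (simp add: moment_def higher_deriv_exp higher_deriv_exp_minus sum_divide_distrib mult.assoc)
qed

lemma moment_0: "moment 0 t = 1"
  by (simp add: moment_def mgf_at_0)

lemma moment_1_odd: "moment 1 (2 * t + 1) = (moment 1 t + moment 1 (t + 1)) / 2"
  using moment_odd[of 1 t] by (simp add: moment_0 add_divide_distrib diff_divide_distrib)

lemma moment_2_odd:
  "moment 2 (2 * t + 1) = (moment 2 t + moment 2 (t + 1)) / 2 + moment 1 t - moment 1 (t + 1) + 1"
  using moment_odd[of 2 t]
  by (simp add: moment_0 eval_nat_numeral add_divide_distrib diff_divide_distrib algebra_simps)

lemma moment_3_odd:
  "moment 3 (2 * t + 1) = (moment 3 t + moment 3 (t + 1)) / 2 + 3 / 2 * (moment 2 t - moment 2 (t + 1))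
     + 3 / 2 * (moment 1 t + moment 1 (t + 1))"
  using moment_odd[of 3 t]
  by (simp add: moment_0 eval_nat_numeral add_divide_distrib diff_divide_distrib algebra_simps)

lemma moment_1: "moment 1 t = 0"
proof -
  have moment_1_0: "moment 1 0 = 0"
    by (simp add: moment_def mgf_0 [abs_def])
  show ?thesis
  proof (induction t rule: binary_induct)
    case one
    show ?case using moment_1_odd[of 0] moment_1_0 by (simp add: field_simps)
  next
    case (double t)
    then show ?case by (simp add: moment_even)
  next
    case (Suc_double t)
    then show ?case using moment_1_odd[of t] by simp
  qed (rule moment_1_0)
qed

lemma kappa_eq_moment: "kappa 2 t = moment 2 t" "kappa 3 t = moment 3 t"
proof -
  have "deriv (mgf t) 0 = 0"
    using moment_1[of t] by (simp add: moment_def)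
  note Ln_mgf_derivs = higher_deriv_Ln_comp_at_0[OF mgf_holomorphic open_halfspace_Re_gt _ mgf_at_0 this]
  show "kappa 2 t = moment 2 t" "kappa 3 t = moment 3 t"
    unfolding kappa_def moment_def cgf_eq_Ln_mgf by (simp_all add: Ln_mgf_derivs)
qed

lemma kappa_even: "kappa n (2 * t) = kappa n t"
  by (simp add: kappa_def cgf_eq_Ln_mgf mgf_even)

lemma kappa_2_odd: "kappa 2 (2 * t + 1) = (kappa 2 t + kappa 2 (t + 1)) / 2 + 1"
  unfolding kappa_eq_moment moment_2_odd moment_1 by simp

lemma kappa_3_odd:
  "kappa 3 (2 * t + 1) = (kappa 3 t + kappa 3 (t + 1)) / 2 + 3 / 2 * (kappa 2 t - kappa 2 (t + 1))"
  unfolding kappa_eq_moment moment_3_odd moment_1 by simp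

lemma D_even: "D (2 * t) = D t"
  by (simp add: D_def kappa_even)

lemma D_odd: "D (2 * t + 1) = 1 + (D t + D (t + 1)) / 2 + (Re (kappa 2 (t + 1)) - Re (kappa 2 t)) / 2"
  unfolding D_def kappa_2_odd kappa_3_odd by (simp add: field_simps)

section \<open>Iterating the odd recursion\<close>

lemma chain_index_Suc: "2 ^ (Suc j + 1) * t + 2 ^ Suc j - 1 = 2 * (2 ^ (j + 1) * t + 2 ^ j - 1) + (1 :: nat)"
proof -
  obtain p where "(2 :: nat) ^ j = Suc p"
    using not0_implies_Suc[of "2 ^ j"] by auto
  then show ?thesis by (simp add: algebra_simps)
qed

lemma chain_index_plus_1: "2 ^ (j + 1) * t + 2 ^ j - 1 + 1 = 2 ^ j * (2 * t + (1 :: nat))"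
proof -
  obtain p where "(2 :: nat) ^ j = Suc p"
    using not0_implies_Suc[of "2 ^ j"] by auto
  then show ?thesis by (simp add: algebra_simps)
qed

locale binary_cumulant_recursion =
  fixes v d :: "nat \<Rightarrow> real"
  assumes v_even: "v (2 * t) = v t"
    and v_odd: "v (2 * t + 1) = (v t + v (t + 1)) / 2 + 1"
    and d_even: "d (2 * t) = d t"
    and d_odd: "d (2 * t + 1) = 1 + (d t + d (t + 1)) / 2 + (v (t + 1) - v t) / 2"
begin

lemma v_increment_ge: "v (s + 1) - v s \<ge> -2"
proof (induction s rule: binary_induct)
  case zero
  show ?case using v_odd[of 0] by (simp add: field_simps)
next
  case one
  show ?case using v_even[of 1] by (simp add: numeral_2_eq_2)
next
  case (double n)
  then show ?case unfolding v_odd v_even by (simp add: field_simps)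
next
  case (Suc_double n)
  have "2 * n + 1 + 1 = 2 * (n + 1)" by simp
  then have "v (2 * n + 1 + 1) = v (n + 1)" by (simp only: v_even)
  then show ?case using v_odd[of n] Suc_double by (simp add: field_simps)
qed

lemma v_chain:
  "v (2 ^ (j + 1) * t + 2 ^ j - 1) = v (2 * t + 1) + 2 - (v (t + 1) - v t + 6) / 2 ^ (j + 1)"
proof (induction j)
  case 0
  have index: "2 ^ (0 + 1) * t + 2 ^ 0 - 1 = 2 * t" by simp
  show ?case unfolding index v_even v_odd by (simp add: field_simps)
next
  case (Suc j)
  define n where "n = 2 ^ (j + 1) * t + 2 ^ j - 1"
  have v_n_Suc: "v (n + 1) = v (2 * t + 1)"
    unfolding n_def chain_index_plus_1 using v_even by (rule pow2_mult_invariant)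
  have "v (2 ^ (Suc j + 1) * t + 2 ^ Suc j - 1) = (v n + v (n + 1)) / 2 + 1"
    unfolding chain_index_Suc n_def[symmetric] by (rule v_odd)
  also have "\<dots> = v (2 * t + 1) + 2 - (v (t + 1) - v t + 6) / 2 ^ (Suc j + 1)"
    unfolding v_n_Suc Suc.IH[folded n_def] by (simp add: field_simps)
  finally show ?case .
qed

lemma d_chain:
  "d (2 ^ (j + 1) * t + 2 ^ j - 1) =
     d (2 * t + 1) + (d t - d (2 * t + 1)) / 2 ^ j + j * (v (t + 1) - v t + 6) / 2 ^ (j + 1)"
proof (induction j)
  case 0
  show ?case using d_even[of t] by simp
next
  case (Suc j)
  define n where "n = 2 ^ (j + 1) * t + 2 ^ j - 1"
  have d_n_Suc: "d (n + 1) = d (2 * t + 1)"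
    unfolding n_def chain_index_plus_1 using d_even by (rule pow2_mult_invariant)
  have v_n_Suc: "v (n + 1) = v (2 * t + 1)"
    unfolding n_def chain_index_plus_1 using v_even by (rule pow2_mult_invariant)
  have "d (2 ^ (Suc j + 1) * t + 2 ^ Suc j - 1) = 1 + (d n + d (n + 1)) / 2 + (v (n + 1) - v n) / 2"
    unfolding chain_index_Suc n_def[symmetric] by (rule d_odd)
  also have "\<dots> = d (2 * t + 1) + (d t - d (2 * t + 1)) / 2 ^ Suc j
                    + Suc j * (v (t + 1) - v t + 6) / 2 ^ (Suc j + 1)"
    unfolding d_n_Suc v_n_Suc Suc.IH[folded n_def] v_chain[of j t, folded n_def]
    by (simp add: field_simps)
  finally show ?case .
qed

lemma d_chain_lower_bound:
  "d (2 ^ (k + 1) * t + 2 ^ k - 1) \<ge> min (d t) (d (t + 1)) + 2 * k / 2 ^ k"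
proof -
  define x where "x = v (t + 1) - v t"
  define c :: real where "c = 1 / 2 ^ k"
  define m where "m = min (d t) (d (t + 1))"
  have x: "x + 2 \<ge> 0"
    using v_increment_ge[of t] by (simp add: x_def)
  have c: "0 \<le> c" "c \<le> 1"
    by (simp_all add: c_def)
  have "d (2 * t + 1) - m \<ge> (x + 2) / 2"
    unfolding d_odd m_def x_def by (simp add: min_def field_simps)
  then have "0 \<le> (1 - c) * (d (2 * t + 1) - m) + c * (d t - m) + k * c * ((x + 2) / 2)"
    using x c by (intro add_nonneg_nonneg mult_nonneg_nonneg) (auto simp: m_def)
  also have "\<dots> = d (2 ^ (k + 1) * t + 2 ^ k - 1) - m - 2 * k / 2 ^ k"
    unfolding d_chain x_def c_def by (simp add: field_simps)
  finally show ?thesis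
    by (simp add: m_def)
qed

end

interpretation cumulants: binary_cumulant_recursion "\<lambda>t. Re (kappa 2 t)" D
proof
  show "Re (kappa 2 (2 * t)) = Re (kappa 2 t)" "D (2 * t) = D t" for t
    by (simp_all add: kappa_even D_even)
  show "Re (kappa 2 (2 * t + 1)) = (Re (kappa 2 t) + Re (kappa 2 (t + 1))) / 2 + 1" for t
    unfolding kappa_2_odd by simp
  show "D (2 * t + 1) = 1 + (D t + D (t + 1)) / 2 + (Re (kappa 2 (t + 1)) - Re (kappa 2 t)) / 2" for t
    by (rule D_odd)
qed

theorem corollary2p11:
  fixes t k :: nat
  assumes "k \<ge> 1"
  shows "D (2 ^ (k + 1) * t + 2 ^ k - 1) \<ge> min (D t) (D (t + 1)) + real k / 2 ^ (k - 1)"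
proof -
  have "real k / 2 ^ (k - 1) = 2 * k / 2 ^ k"
    using assms by (cases k) (simp_all add: field_simps)
  then show ?thesis
    using cumulants.d_chain_lower_bound[of t k] by simp
qed

end
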